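(* Let $\ell\ge 4$, $s\ge0$, $r\ge 2$ be integers and $k=\lfloor(\ell-2)/2\rfloor$. For every $\gamma>0$ there is $n_0$ such that for every $n\ge n_0$ the following holds: if $G$ is an $n$-vertex $B(\ell,s)$-free graph that maximizes $e_r(G)$ among all $n$-vertex $B(\ell,s)$-free graphs, or that maximizes $\mathcal N(S_r,G)$ among all $n$-vertex $B(\ell,s)$-free graphs, then there is a set $B\subseteq V(G)$ with $|B|=k$ such that at least $(1-\gamma)\binom{n}{r}$ of the $r$-element subsets of $V(G)$ have common neighborhood exactly $B$.
   Context: For a graph $G$ with degrees $d_1,\dots,d_n$, $e_r(G)=\sum_i d_i^r$ and $\mathcal N(S_r,G)=\sum_i\binom{d_i}{r}$ is the number of copies of the star $S_r$ with $r$ leaves. The broom $B(\ell,s)$ is the graph obtained from a path on $\ell$ vertices by adding $s$ new vertices, each joined only to a penultimate vertex of the path (a neighbor of an endpoint). The common neighborhood of a vertex set $X$ is the set of vertices adjacent to every vertex of $X$. *)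

theory Defs
  imports Complex_Main
begin

definition is_graph :: "nat \<Rightarrow> (nat \<Rightarrow> nat \<Rightarrow> bool) \<Rightarrow> bool" where
  "is_graph n E \<longleftrightarrow> (\<forall>u v. E u v \<longrightarrow> E v u) \<and> (\<forall>u. \<not> E u u)
     \<and> (\<forall>u v. E u v \<longrightarrow> u < n \<and> v < n)"

definition degree :: "nat \<Rightarrow> (nat \<Rightarrow> nat \<Rightarrow> bool) \<Rightarrow> nat \<Rightarrow> nat" where
  "degree n E u = card {v \<in> {0..<n}. E u v}"

definition e_pow :: "nat \<Rightarrow> nat \<Rightarrow> (nat \<Rightarrow> nat \<Rightarrow> bool) \<Rightarrow> nat" where
  "e_pow r n E = (\<Sum>u\<in>{0..<n}. degree n E u ^ r)"

text \<open>N(S_r,G) = number of copies of the star with r leaves.\<close>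
definition star_count :: "nat \<Rightarrow> nat \<Rightarrow> (nat \<Rightarrow> nat \<Rightarrow> bool) \<Rightarrow> nat" where
  "star_count r n E = (\<Sum>u\<in>{0..<n}. degree n E u choose r)"

text \<open>The broom B(l,s) on vertices {0..<l+s}: path 0-1-...-(l-1), and the s extra
  vertices l..l+s-1 each joined only to vertex 1 (a neighbour of the endpoint 0).\<close>
definition broom_edge :: "nat \<Rightarrow> nat \<Rightarrow> nat \<Rightarrow> nat \<Rightarrow> bool" where
  "broom_edge l s i j \<longleftrightarrow>
     (i < l \<and> j < l \<and> (j = i + 1 \<or> i = j + 1))
     \<or> (l \<le> i \<and> i < l + s \<and> j = 1)
     \<or> (l \<le> j \<and> j < l + s \<and> i = 1)"

definition contains_subgraph ::
  "nat \<Rightarrow> (nat \<Rightarrow> nat \<Rightarrow> bool) \<Rightarrow> nat \<Rightarrow> (nat \<Rightarrow> nat \<Rightarrow> bool) \<Rightarrow> bool" where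
  "contains_subgraph n E m H \<longleftrightarrow>
     (\<exists>f. inj_on f {0..<m} \<and> f ` {0..<m} \<subseteq> {0..<n}
        \<and> (\<forall>i j. i < m \<longrightarrow> j < m \<longrightarrow> H i j \<longrightarrow> E (f i) (f j)))"

definition broom_free :: "nat \<Rightarrow> nat \<Rightarrow> nat \<Rightarrow> (nat \<Rightarrow> nat \<Rightarrow> bool) \<Rightarrow> bool" where
  "broom_free l s n E \<longleftrightarrow> \<not> contains_subgraph n E (l + s) (broom_edge l s)"

definition common_nbhd :: "nat \<Rightarrow> (nat \<Rightarrow> nat \<Rightarrow> bool) \<Rightarrow> nat set \<Rightarrow> nat set" where
  "common_nbhd n E X = {v \<in> {0..<n}. \<forall>x\<in>X. E x v}"

end

theory Submission
  imports Defs "HOL-Library.FuncSet"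
begin

text \<open>
  A \<open>B(l,s)\<close>-free graph contains no path-with-pendants in a subgraph of minimum degree \<open>l + s\<close>,
  so it is \<open>(l + s)\<close>-degenerate and has \<open>O(n)\<close> edges; it also contains no
  \<open>K\<^sub>k\<^sub>+\<^sub>1\<^sub>,\<^sub>k\<^sub>+\<^sub>2\<^sub>+\<^sub>s\<close>.
  Comparing with \<open>K\<^sub>k + \<overline>K\<^sub>n\<^sub>-\<^sub>k\<close>, a maximizer has \<open>\<Sum> d\<^sup>r \<ge> (k - o(1)) n\<^sup>r\<close>, and
  only the \<open>O(1)\<close> heavy vertices (degree \<open>\<ge> \<epsilon>n\<close>) matter.
  Counting \<open>r\<close>-tuples of vertices by their common neighbours among the heavy vertices \<open>H\<close>:
  a tuple has at most \<open>k\<close> of them unless it meets the \<open>O(1)\<close> vertices with more than \<open>k\<close> heavy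
  neighbours (few by the biclique bound), and exactly \<open>k\<close> only if all its entries have the same
  trace \<open>T\<close> on \<open>H\<close>. Hence the trace classes \<open>V\<^sub>T\<close>, \<open>|T| = k\<close>, satisfy
  \<open>\<Sum> |V\<^sub>T|\<^sup>r \<ge> (1 - o(1)) n\<^sup>r\<close>; being disjoint, one of them has \<open>(1 - o(1)) n\<close> vertices.
  An \<open>r\<close>-subset of that class has common neighbourhood exactly \<open>T\<close> unless it has a common light
  neighbour, and light vertices carry only \<open>O(\<epsilon>) n\<^sup>r\<close> such \<open>r\<close>-sets.
\<close>

section \<open>Elementary inequalities\<close>

lemma card_Diff_image_ge:
  assumes "finite X"
  shows "card X - m \<le> card (X - f ` {0..<m})"
proof -
  have "card X - card (f ` {0..<m}) \<le> card (X - f ` {0..<m})"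
    using assms by (intro diff_card_le_card_Diff) auto
  moreover have "card (f ` {0..<m}) \<le> m" using card_image_le[of "{0..<m}" f] by simp
  ultimately show ?thesis by linarith
qed

lemma power_diff_le:
  fixes x y :: real
  assumes "0 \<le> y" "y \<le> x" "r \<ge> 1"
  shows "x ^ r - y ^ r \<le> r * (x - y) * x ^ (r - 1)"
proof -
  have "x ^ Suc m - y ^ Suc m \<le> Suc m * (x - y) * x ^ m" for m
  proof (induction m)
    case (Suc m)
    have "x ^ Suc (Suc m) - y ^ Suc (Suc m) = x * (x ^ Suc m - y ^ Suc m) + y ^ Suc m * (x - y)"
      by (simp add: algebra_simps)
    also have "\<dots> \<le> x * (Suc m * (x - y) * x ^ m) + x ^ Suc m * (x - y)"
      using Suc assms by (intro add_mono mult_left_mono mult_right_mono power_mono) auto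
    finally show ?case by (simp add: algebra_simps)
  qed simp
  then show ?thesis using assms(3) by (metis Suc_diff_le diff_Suc_1 of_nat_Suc)
qed

lemma self_power_ge:
  assumes "2 \<le> r"
  shows "2 * real r \<le> real r ^ r" "4 \<le> real r ^ r"
proof -
  have "real r ^ 2 \<le> real r ^ r" using assms by (intro power_increasing) auto
  moreover have "2 * real r \<le> real r ^ 2" "4 \<le> real r ^ 2"
    using assms mult_mono[of 2 "real r" 2 "real r"] by (simp_all add: power2_eq_square)
  ultimately show "2 * real r \<le> real r ^ r" "4 \<le> real r ^ r" by linarith+
qed

lemma power_le_fact_mult_choose: "r \<le> m \<Longrightarrow> (m + 1 - r) ^ r \<le> fact r * (m choose r)"
proof (induction r arbitrary: m)
  case 0 then show ?case by simp
next
  case (Suc r)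
  then obtain m' where m: "m = Suc m'" by (cases m) auto
  have "(m + 1 - Suc r) ^ Suc r = (m' + 1 - r) * (m' + 1 - r) ^ r" using m by simp
  also have "\<dots> \<le> Suc m' * (fact r * (m' choose r))"
    using Suc.IH[of m'] Suc.prems m by (intro mult_mono) auto
  also have "\<dots> = fact r * (Suc r * (Suc m' choose Suc r))"
    by (simp only: Suc_times_binomial) (simp add: algebra_simps)
  also have "\<dots> = fact (Suc r) * (m choose Suc r)" using m by (simp add: algebra_simps)
  finally show ?case .
qed

lemma choose_le_choose_add_diff:
  assumes "m \<le> n" "r \<ge> 1"
  shows "n choose r \<le> (m choose r) + (n - m) * ((n - 1) choose (r - 1))"
  using assms(1)
proof (induction n rule: dec_induct)
  case base
  then show ?case by simp
next
  case (step j)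
  obtain r' where r': "r = Suc r'" using assms(2) by (cases r) auto
  have "Suc j choose r = (j choose r) + (j choose r')" by (simp add: r')
  also have "\<dots> \<le> (m choose r) + (j - m) * ((j - 1) choose r') + (j choose r')" using step.IH by (simp add: r')
  also have "\<dots> \<le> (m choose r) + (j - m) * (j choose r') + (j choose r')"
    by (intro add_mono mult_left_mono binomial_right_mono) auto
  also have "\<dots> = (m choose r) + (Suc j - m) * ((Suc j - 1) choose (r - 1))"
    using step.hyps by (simp add: r' Suc_diff_le)
  finally show ?case .
qed

lemma exists_gt_of_power_sum_gt:
  fixes x :: "'a \<Rightarrow> real"
  assumes I: "finite I" and x: "\<And>i. i \<in> I \<Longrightarrow> 0 \<le> x i" and N: "sum x I \<le> N"
    and q: "0 \<le> q" and r: "r \<ge> 1" and gt: "q ^ (r - 1) * N < (\<Sum>i\<in>I. x i ^ r)"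
  shows "\<exists>i\<in>I. q < x i"
proof (rule ccontr)
  assume "\<not> (\<exists>i\<in>I. q < x i)"
  then have "x i ^ r \<le> q ^ (r - 1) * x i" if "i \<in> I" for i
    using x[OF that] r that
    by (metis Suc_diff_le diff_Suc_1 mult.commute mult_left_mono not_less power_Suc2 power_mono)
  then have "(\<Sum>i\<in>I. x i ^ r) \<le> q ^ (r - 1) * sum x I" unfolding sum_distrib_left by (rule sum_mono)
  also have "\<dots> \<le> q ^ (r - 1) * N" using N q by (intro mult_left_mono) auto
  finally show False using gt by simp
qed

section \<open>Brooms in dense graphs\<close>

definition is_path :: "(nat \<Rightarrow> nat \<Rightarrow> bool) \<Rightarrow> nat set \<Rightarrow> nat \<Rightarrow> (nat \<Rightarrow> nat) \<Rightarrow> bool" where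
  "is_path E S m p \<longleftrightarrow> inj_on p {0..<m} \<and> p ` {0..<m} \<subseteq> S \<and> (\<forall>i. Suc i < m \<longrightarrow> E (p i) (p (Suc i)))"

lemma is_path_mono: "is_path E S m p \<Longrightarrow> S \<subseteq> S' \<Longrightarrow> is_path E S' m p"
  by (auto simp: is_path_def)

lemma path_with_pendants_not_broom_free:
  assumes G: "is_graph n E" and p: "is_path E {0..<n} l p" and l2: "l \<ge> 2"
    and A: "A \<subseteq> {0..<n}" "card A = s" "A \<inter> p ` {0..<l} = {}" "\<And>a. a \<in> A \<Longrightarrow> E (p 1) a"
  shows "\<not> broom_free l s n E"
proof -
  have fA: "finite A" using A(1) finite_subset by blast
  obtain g where g: "bij_betw g {0..<s} A" using ex_bij_betw_nat_finite[OF fA] A(2) by auto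
  have gA: "\<And>j. j < s \<Longrightarrow> g j \<in> A" and ginj: "inj_on g {0..<s}"
    using g by (auto simp: bij_betw_def)
  have sym: "\<And>u v. E u v \<Longrightarrow> E v u" using G by (auto simp: is_graph_def)
  define f where "f i = (if i < l then p i else g (i - l))" for i
  have "inj_on f {l..<l+s}"
  proof (rule inj_onI)
    fix i j assume "i \<in> {l..<l+s}" "j \<in> {l..<l+s}" "f i = f j"
    then show "i = j"
      using inj_onD[OF ginj, of "i - l" "j - l"] by (auto simp: f_def less_diff_conv2 eq_diff_iff)
  qed
  moreover have "f ` {l..<l+s} \<subseteq> A" using gA by (auto simp: f_def)
  moreover have "inj_on f {0..<l}" "f ` {0..<l} = p ` {0..<l}"
    using p by (auto simp: f_def is_path_def inj_on_def)
  ultimately have "inj_on f ({0..<l} \<union> {l..<l+s})"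
    using A(3) by (subst inj_on_Un) (auto simp: Diff_triv)
  moreover have "{0..<l} \<union> {l..<l+s} = {0..<l+s}" by auto
  ultimately have "inj_on f {0..<l+s}" by simp
  moreover have "f ` {0..<l+s} \<subseteq> {0..<n}"
    using p gA A(1) by (auto simp: f_def is_path_def)
  moreover have "E (f i) (f j)" if "i < l+s" "j < l+s" "broom_edge l s i j" for i j
    using \<open>broom_edge l s i j\<close> unfolding broom_edge_def
  proof (elim disjE conjE)
    assume "i < l" "j < l" "j = i + 1" then show ?thesis using p by (simp add: f_def is_path_def)
  next
    assume "i < l" "j < l" "i = j + 1" then show ?thesis using p sym by (simp add: f_def is_path_def)
  next
    assume "l \<le> i" "i < l + s" "j = 1" then show ?thesis using A(4) gA sym l2 by (simp add: f_def)
  next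
    assume "l \<le> j" "j < l + s" "i = 1" then show ?thesis using A(4) gA l2 by (simp add: f_def)
  qed
  ultimately show ?thesis unfolding broom_free_def contains_subgraph_def by blast
qed

lemma min_degree_path:
  assumes S: "finite S" "S \<noteq> {}" and deg: "\<And>v. v \<in> S \<Longrightarrow> d \<le> card {w\<in>S. E v w}"
    and m: "1 \<le> m" "m \<le> d"
  shows "\<exists>p. is_path E S m p"
  using m(1)
proof (induction m rule: dec_induct)
  case base
  obtain v where "v \<in> S" using S(2) by auto
  then show ?case by (intro exI[of _ "\<lambda>_. v"]) (simp add: is_path_def)
next
  case (step j)
  then obtain p where p: "is_path E S j p" by auto
  define N where "N = {w\<in>S. E (p (j - 1)) w} - p ` {0..<j}"
  have "p (j - 1) \<in> S" using p step.hyps(1) by (auto simp: is_path_def)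
  then have "d \<le> card {w\<in>S. E (p (j - 1)) w}" by (rule deg)
  moreover have "card {w\<in>S. E (p (j - 1)) w} - j \<le> card N"
    unfolding N_def using S(1) by (intro card_Diff_image_ge) simp
  ultimately have "card N \<noteq> 0" using step.hyps(2) m(2) by linarith
  then obtain w where w: "w \<in> N" by (metis card.empty ex_in_conv)
  have img: "(p(j := w)) ` {0..<j} = p ` {0..<j}" by (intro image_cong) auto
  have "inj_on (p(j := w)) {0..<j}"
    using p by (auto simp: is_path_def inj_on_def)
  then have "inj_on (p(j := w)) {0..<Suc j}"
    using w img by (simp add: N_def atLeast0_lessThan_Suc)
  moreover have "(p(j := w)) ` {0..<Suc j} \<subseteq> S"
    using p w img by (auto simp: N_def atLeast0_lessThan_Suc is_path_def)
  moreover have "E ((p(j := w)) i) ((p(j := w)) (Suc i))" if "Suc i < Suc j" for i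
    using p w that by (cases "Suc i = j") (auto simp: N_def is_path_def)
  ultimately show ?case unfolding is_path_def by blast
qed

lemma min_degree_not_broom_free:
  assumes G: "is_graph n E" and S: "S \<subseteq> {0..<n}" "S \<noteq> {}"
    and deg: "\<And>v. v \<in> S \<Longrightarrow> l + s \<le> card {w\<in>S. E v w}" and l2: "l \<ge> 2"
  shows "\<not> broom_free l s n E"
proof -
  have fS: "finite S" using S(1) finite_subset by blast
  obtain p where p: "is_path E S l p" using min_degree_path[of S "l + s" E l] fS S(2) deg l2 by auto
  define N where "N = {w\<in>S. E (p 1) w} - p ` {0..<l}"
  have "p 1 \<in> S" using p l2 by (auto simp: is_path_def)
  then have "l + s \<le> card {w\<in>S. E (p 1) w}" by (rule deg)
  moreover have "card {w\<in>S. E (p 1) w} - l \<le> card N"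
    unfolding N_def using fS by (intro card_Diff_image_ge) simp
  ultimately have "s \<le> card N" by linarith
  then obtain A where A: "A \<subseteq> N" "card A = s" by (meson obtain_subset_with_card_n)
  show ?thesis
  proof (rule path_with_pendants_not_broom_free[OF G _ l2])
    show "is_path E {0..<n} l p" using p S(1) by (auto simp: is_path_def)
    show "A \<subseteq> {0..<n}" "A \<inter> p ` {0..<l} = {}" "\<And>a. a \<in> A \<Longrightarrow> E (p 1) a"
      using A(1) S(1) by (auto simp: N_def)
  qed fact
qed

lemma alternating_path:
  assumes sym: "\<And>u v. E u v \<Longrightarrow> E v u" and CK: "\<And>u v. u \<in> C \<Longrightarrow> v \<in> K \<Longrightarrow> E u v"
    and disj: "C \<inter> K = {}"
    and c: "inj_on c {0..<a}" "c ` {0..<a} \<subseteq> C" and h: "inj_on h {0..<b}" "h ` {0..<b} \<subseteq> K"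
    and l: "l \<le> 2 * a" "l \<le> 2 * b + 1"
  shows "is_path E (c ` {0..<a} \<union> K) l (\<lambda>i. if even i then c (i div 2) else h (i div 2))"
    (is "is_path E _ l ?p")
proof -
  have ev: "i div 2 < a" if "i < l" "even i" for i using that l(1) by auto
  have od: "i div 2 < b" if "i < l" "odd i" for i using that l(2) by (auto elim!: oddE)
  have pC: "?p i \<in> c ` {0..<a}" if "i < l" "even i" for i using ev[OF that] that(2) by simp
  have pK: "?p i \<in> K" if "i < l" "odd i" for i using h(2) od[OF that] that(2) by auto
  have "inj_on ?p {0..<l}"
  proof (rule inj_onI)
    fix i j assume i: "i \<in> {0..<l}" and j: "j \<in> {0..<l}" and eq: "?p i = ?p j"
    have inC: "?p i \<in> C \<longleftrightarrow> even i" if "i < l" for i using pC pK c(2) disj that by blast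
    have par: "even i \<longleftrightarrow> even j" using inC[of i] inC[of j] i j eq by (simp only: atLeastLessThan_iff)
    have "i div 2 = j div 2"
    proof (cases "even i")
      case True
      then show ?thesis using eq par ev[of i] ev[of j] i j inj_onD[OF c(1), of "i div 2" "j div 2"] by simp
    next
      case False
      then show ?thesis using eq par od[of i] od[of j] i j inj_onD[OF h(1), of "i div 2" "j div 2"] by simp
    qed
    then show "i = j" using par by presburger
  qed
  moreover have "?p ` {0..<l} \<subseteq> c ` {0..<a} \<union> K"
  proof (intro image_subsetI)
    fix i assume "i \<in> {0..<l}"
    then show "?p i \<in> c ` {0..<a} \<union> K" using pC[of i] pK[of i] by (cases "even i") auto
  qed
  moreover have "E (?p i) (?p (Suc i))" if "Suc i < l" for i
  proof (cases "even i")
    case True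
    then have "?p i \<in> C" "?p (Suc i) \<in> K" using pC[of i] pK[of "Suc i"] c(2) that by auto
    then show ?thesis using CK by blast
  next
    case False
    then have "?p i \<in> K" "?p (Suc i) \<in> C" using pK[of i] pC[of "Suc i"] c(2) that by auto
    then show ?thesis using CK sym by blast
  qed
  ultimately show ?thesis by (simp add: is_path_def)
qed

lemma biclique_not_broom_free:
  assumes G: "is_graph n E" and K: "K \<subseteq> {0..<n}" "card K = k + 1"
    and C: "C \<subseteq> {0..<n}" "k + 2 + s \<le> card C" and CK: "\<And>u v. u \<in> C \<Longrightarrow> v \<in> K \<Longrightarrow> E u v"
    and l: "2 \<le> l" "l \<le> 2 * k + 3"
  shows "\<not> broom_free l s n E"
proof -
  have sym: "\<And>u v. E u v \<Longrightarrow> E v u" using G by (auto simp: is_graph_def)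
  have disj: "C \<inter> K = {}" using CK G unfolding is_graph_def by blast
  have "finite K" using K(1) finite_subset by blast
  then obtain h where h: "bij_betw h {0..<k+1} K" using ex_bij_betw_nat_finite K(2) by metis
  obtain C' where C': "C' \<subseteq> C" "card C' = k + 2 + s" by (meson C(2) obtain_subset_with_card_n)
  then have "finite C'" by (intro card_ge_0_finite) simp
  then obtain c where c: "bij_betw c {0..<k+2+s} C'" using ex_bij_betw_nat_finite C'(2) by metis
  have cC: "c ` {0..<k+2+s} \<subseteq> C" and cinj: "inj_on c {0..<k+2+s}"
    using c C'(1) by (auto simp: bij_betw_def)
  let ?p = "\<lambda>i. if even i then c (i div 2) else h (i div 2)"
  have "is_path E (c ` {0..<k+2} \<union> K) l ?p"
    using h cC l by (intro alternating_path[OF sym CK disj] inj_on_subset[OF cinj])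
      (auto simp: bij_betw_def)
  moreover have "c ` {0..<k+2} \<subseteq> c ` {0..<k+2+s}" by (intro image_mono) auto
  then have "c ` {0..<k+2} \<union> K \<subseteq> {0..<n}" using cC C(1) K(1) by blast
  ultimately have path: "is_path E {0..<n} l ?p" by (rule is_path_mono)
  have path_in: "?p ` {0..<l} \<subseteq> c ` {0..<k+2} \<union> K"
    using \<open>is_path E (c ` {0..<k+2} \<union> K) l ?p\<close> by (simp only: is_path_def)
  have pend: "c ` {k+2..<k+2+s} \<subseteq> C" using cC by (auto simp: image_subset_iff)
  show ?thesis
  proof (rule path_with_pendants_not_broom_free[OF G path l(1)])
    have "c ` {k+2..<k+2+s} \<inter> c ` {0..<k+2} = {}"
      using inj_on_image_Int[OF cinj, of "{k+2..<k+2+s}" "{0..<k+2}"] by auto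
    then show "c ` {k+2..<k+2+s} \<inter> ?p ` {0..<l} = {}" using path_in pend disj by blast
    show "c ` {k+2..<k+2+s} \<subseteq> {0..<n}" using pend C(1) by blast
    show "card (c ` {k+2..<k+2+s}) = s" by (subst card_image) (auto intro: inj_on_subset[OF cinj])
    have "?p 1 \<in> K" using h by (auto simp: bij_betw_def)
    then show "E (?p 1) a" if "a \<in> c ` {k+2..<k+2+s}" for a using that pend CK sym by blast
  qed
qed

lemma broom_free_adjacent_pairs_le:
  assumes G: "is_graph n E" and bf: "broom_free l s n E" and l2: "l \<ge> 2" and S: "S \<subseteq> {0..<n}"
  shows "card {(u, w). u \<in> S \<and> w \<in> S \<and> E u w} \<le> 2 * (l + s) * card S"
  using finite_subset[OF S finite_atLeastLessThan]
proof (induction rule: finite_remove_induct)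
  case empty
  then show ?case by simp
next
  case (remove A)
  let ?pairs = "\<lambda>S. {(u, w). u \<in> S \<and> w \<in> S \<and> E u w}"
  \<comment> \<open>broom-freeness makes the graph \<open>(l + s)\<close>-degenerate\<close>
  obtain v where v: "v \<in> A" and dv: "card {w\<in>A. E v w} < l + s"
    using min_degree_not_broom_free[OF G _ remove.hyps(2) _ l2] remove.hyps(3) S bf
    by (meson not_le order_trans)
  define N where "N = {w\<in>A. E v w}"
  have sym: "\<And>u v. E u v \<Longrightarrow> E v u" using G by (auto simp: is_graph_def)
  have "?pairs A \<subseteq> ?pairs (A - {v}) \<union> ({v} \<times> N) \<union> (N \<times> {v})"
    using sym by (auto simp: N_def)
  moreover have "finite (?pairs (A - {v}))"
    by (rule finite_subset[of _ "A \<times> A"]) (auto simp: remove.hyps(1))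
  ultimately have "card (?pairs A) \<le> card (?pairs (A - {v}) \<union> ({v} \<times> N) \<union> (N \<times> {v}))"
    using remove.hyps(1) by (intro card_mono) (auto simp: N_def)
  also have "\<dots> \<le> card (?pairs (A - {v})) + card ({v} \<times> N) + card (N \<times> {v})"
    by (meson card_Un_le le_trans add_le_mono1)
  also have "\<dots> = card (?pairs (A - {v})) + 2 * card N" by (simp add: card_cartesian_product)
  also have "\<dots> \<le> 2 * (l + s) * card (A - {v}) + 2 * card N"
    using remove.IH[OF v] by simp
  also have "\<dots> \<le> 2 * (l + s) * card A"
  proof -
    have "2 * (l + s) * card A = 2 * (l + s) * card (A - {v}) + 2 * (l + s)"
      using card_Suc_Diff1[OF remove.hyps(1) v] by (metis mult_Suc_right add.commute)
    then show ?thesis using dv by (simp add: N_def)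
  qed
  finally show ?case .
qed

lemma broom_free_degree_sum_le:
  assumes G: "is_graph n E" and bf: "broom_free l s n E" and l2: "l \<ge> 2"
  shows "(\<Sum>v\<in>{0..<n}. degree n E v) \<le> 2 * (l + s) * n"
proof -
  have "{(u, w). u \<in> {0..<n} \<and> w \<in> {0..<n} \<and> E u w} = Sigma {0..<n} (\<lambda>u. {w\<in>{0..<n}. E u w})"
    by auto
  then have "(\<Sum>v\<in>{0..<n}. degree n E v) = card {(u, w). u \<in> {0..<n} \<and> w \<in> {0..<n} \<and> E u w}"
    by (simp add: card_SigmaI degree_def)
  then show ?thesis using broom_free_adjacent_pairs_le[OF G bf l2, of "{0..<n}"] by simp
qed

section \<open>The extremal graph\<close>

text \<open>The graph \<open>K\<^sub>k + \<overline>K\<^sub>n\<^sub>-\<^sub>k\<close> of the paper, with the \<open>k\<close> universal vertices below \<open>k\<close>.\<close>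
definition apex_graph :: "nat \<Rightarrow> nat \<Rightarrow> nat \<Rightarrow> nat \<Rightarrow> bool" where
  "apex_graph n k u v \<longleftrightarrow> u < n \<and> v < n \<and> u \<noteq> v \<and> (u < k \<or> v < k)"

lemma is_graph_apex_graph: "is_graph n (apex_graph n k)"
  by (auto simp: is_graph_def apex_graph_def)

lemma broom_free_apex_graph:
  assumes "l \<ge> 2"
  shows "broom_free l s n (apex_graph n ((l - 2) div 2))"
  unfolding broom_free_def contains_subgraph_def
proof (intro notI, elim exE conjE)
  define k where "k = (l - 2) div 2"
  fix f assume inj: "inj_on f {0..<l+s}"
    and edges: "\<forall>i j. i < l+s \<longrightarrow> j < l+s \<longrightarrow> broom_edge l s i j \<longrightarrow> apex_graph n k (f i) (f j)"
  \<comment> \<open>each of the \<open>l div 2\<close> disjoint path edges \<open>{2j, 2j+1}\<close> needs its own vertex below \<open>k\<close>\<close>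
  define I where "I = {i. i < l \<and> f i < k}"
  have "{0..<l div 2} \<subseteq> (\<lambda>i. i div 2) ` I"
  proof
    fix j assume j: "j \<in> {0..<l div 2}"
    then have "broom_edge l s (2*j) (2*j+1)" by (auto simp: broom_edge_def)
    then have "apex_graph n k (f (2*j)) (f (2*j+1))" using edges j by auto
    then have "2*j \<in> I \<or> 2*j+1 \<in> I" using j by (auto simp: apex_graph_def I_def)
    then show "j \<in> (\<lambda>i. i div 2) ` I" by (auto intro: rev_image_eqI)
  qed
  then have "l div 2 \<le> card ((\<lambda>i. i div 2) ` I)"
    using card_mono[of "(\<lambda>i. i div 2) ` I" "{0..<l div 2}"] by (simp add: I_def)
  also have "\<dots> \<le> card I" by (rule card_image_le) (simp add: I_def)
  also have "\<dots> = card (f ` I)"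
    using inj by (intro card_image[symmetric] inj_on_subset[OF inj]) (auto simp: I_def)
  also have "\<dots> \<le> card {0..<k}" by (intro card_mono) (auto simp: I_def)
  finally show False using assms by (simp add: k_def)
qed

lemma degree_apex_graph:
  assumes "u < k" "k \<le> n"
  shows "degree n (apex_graph n k) u = n - 1"
proof -
  have "{v\<in>{0..<n}. apex_graph n k u v} = {0..<n} - {u}" using assms by (auto simp: apex_graph_def)
  then show ?thesis using assms by (simp add: degree_def)
qed

lemma e_pow_apex_graph_ge:
  assumes "k \<le> n"
  shows "k * (n - 1) ^ r \<le> e_pow r n (apex_graph n k)"
proof -
  have "k * (n - 1) ^ r = (\<Sum>u\<in>{0..<k}. degree n (apex_graph n k) u ^ r)"
    using degree_apex_graph[OF _ assms] by simp
  also have "\<dots> \<le> e_pow r n (apex_graph n k)"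
    unfolding e_pow_def using assms by (intro sum_mono2) auto
  finally show ?thesis .
qed

lemma star_count_apex_graph_ge:
  assumes "k \<le> n"
  shows "k * ((n - 1) choose r) \<le> star_count r n (apex_graph n k)"
proof -
  have "k * ((n - 1) choose r) = (\<Sum>u\<in>{0..<k}. degree n (apex_graph n k) u choose r)"
    using degree_apex_graph[OF _ assms] by simp
  also have "\<dots> \<le> star_count r n (apex_graph n k)"
    unfolding star_count_def using assms by (intro sum_mono2) auto
  finally show ?thesis .
qed

lemma fact_mult_star_count_le_e_pow: "fact r * star_count r n E \<le> e_pow r n E"
  unfolding star_count_def e_pow_def sum_distrib_left
  by (intro sum_mono) (metis binomial_fact_pow mult.commute)

lemma maximizer_degree_power_sum_ge:
  assumes max: "(\<forall>E'. is_graph n E' \<and> broom_free l s n E' \<longrightarrow> e_pow r n E' \<le> e_pow r n E) \<or>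
      (\<forall>E'. is_graph n E' \<and> broom_free l s n E' \<longrightarrow> star_count r n E' \<le> star_count r n E)"
    and l2: "l \<ge> 2" and kn: "(l - 2) div 2 \<le> n" and r: "1 \<le> r" "r < n"
  shows "real ((l - 2) div 2) * (real n - real r) ^ r \<le> (\<Sum>v\<in>{0..<n}. real (degree n E v) ^ r)"
proof -
  let ?k = "(l - 2) div 2" and ?apex = "apex_graph n ((l - 2) div 2)"
  have apex: "is_graph n ?apex" "broom_free l s n ?apex"
    using is_graph_apex_graph broom_free_apex_graph[OF l2] by blast+
  have "?k * (n - r) ^ r \<le> e_pow r n E"
    using max
  proof
    assume "\<forall>E'. is_graph n E' \<and> broom_free l s n E' \<longrightarrow> e_pow r n E' \<le> e_pow r n E"
    then have "e_pow r n ?apex \<le> e_pow r n E" using apex by blast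
    moreover have "?k * (n - r) ^ r \<le> ?k * (n - 1) ^ r" using r by (intro mult_left_mono power_mono) auto
    ultimately show ?thesis using e_pow_apex_graph_ge[OF kn, of r] by linarith
  next
    assume "\<forall>E'. is_graph n E' \<and> broom_free l s n E' \<longrightarrow> star_count r n E' \<le> star_count r n E"
    then have "star_count r n ?apex \<le> star_count r n E" using apex by blast
    have "?k * (n - r) ^ r \<le> ?k * (fact r * ((n - 1) choose r))"
      using power_le_fact_mult_choose[of r "n - 1"] r by (intro mult_left_mono) auto
    also have "\<dots> = fact r * (?k * ((n - 1) choose r))" by (simp add: algebra_simps)
    also have "\<dots> \<le> fact r * star_count r n E"
      using star_count_apex_graph_ge[OF kn, of r] \<open>star_count r n ?apex \<le> star_count r n E\<close>
      by (intro mult_left_mono) auto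
    also have "\<dots> \<le> e_pow r n E" by (rule fact_mult_star_count_le_e_pow)
    finally show ?thesis .
  qed
  then have "real (?k * (n - r) ^ r) \<le> real (e_pow r n E)" by (simp only: of_nat_le_iff)
  then show ?thesis using r by (simp add: e_pow_def of_nat_diff)
qed

section \<open>Heavy vertices and trace classes\<close>

definition heavy :: "nat \<Rightarrow> (nat \<Rightarrow> nat \<Rightarrow> bool) \<Rightarrow> real \<Rightarrow> nat set" where
  "heavy n E \<epsilon> = {v\<in>{0..<n}. \<epsilon> * real n \<le> real (degree n E v)}"

definition rich :: "nat \<Rightarrow> (nat \<Rightarrow> nat \<Rightarrow> bool) \<Rightarrow> nat set \<Rightarrow> nat \<Rightarrow> nat set" where
  "rich n E H k = {u\<in>{0..<n}. k < card {v\<in>H. E u v}}"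

definition trace_class :: "nat \<Rightarrow> (nat \<Rightarrow> nat \<Rightarrow> bool) \<Rightarrow> nat set \<Rightarrow> nat set \<Rightarrow> nat set" where
  "trace_class n E H T = {u\<in>{0..<n}. {v\<in>H. E u v} = T}"

lemma heavy_subset: "heavy n E \<epsilon> \<subseteq> {0..<n}"
  by (auto simp: heavy_def)

lemma degree_eq_card_in_nbrs:
  assumes "is_graph n E"
  shows "degree n E v = card {u\<in>{0..<n}. E u v}"
proof -
  have "{u\<in>{0..<n}. E u v} = {u\<in>{0..<n}. E v u}" using assms by (auto simp: is_graph_def)
  then show ?thesis by (simp add: degree_def)
qed

lemma degree_power_eq_card_tuples:
  assumes "is_graph n E"
  shows "degree n E v ^ r = card {x \<in> {0..<r} \<rightarrow>\<^sub>E {0..<n}. \<forall>i<r. E (x i) v}"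
proof -
  have "{x \<in> {0..<r} \<rightarrow>\<^sub>E {0..<n}. \<forall>i<r. E (x i) v} = {0..<r} \<rightarrow>\<^sub>E {u\<in>{0..<n}. E u v}"
    by (auto simp: PiE_iff extensional_def)
  then show ?thesis using degree_eq_card_in_nbrs[OF assms] by (simp add: card_PiE)
qed

lemma tuple_common_nbrs_le:
  fixes r :: nat
  assumes x: "x \<in> {0..<r} \<rightarrow>\<^sub>E {0..<n}" and r: "r \<ge> 1" and k: "k \<ge> 1" and H: "finite H"
  shows "card {v\<in>H. \<forall>i<r. E (x i) v}
    \<le> card H * of_bool (\<exists>i<r. x i \<in> rich n E H k) + (k - 1)
      + (\<Sum>T\<in>{T. T \<subseteq> H \<and> card T = k}. of_bool (x \<in> {0..<r} \<rightarrow>\<^sub>E trace_class n E H T))"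
    (is "card ?T \<le> _ + _ + sum ?ind ?\<T>")
proof (cases "\<exists>i<r. x i \<in> rich n E H k")
  case True
  have "card ?T \<le> card H" by (rule card_mono[OF H]) auto
  then show ?thesis using True by simp
next
  case False
  have small: "card {v\<in>H. E (x i) v} \<le> k" if "i < r" for i
  proof -
    have "x i \<in> {0..<n}" using x that by auto
    then show ?thesis using False that by (auto simp: rich_def)
  qed
  have sub: "?T \<subseteq> {v\<in>H. E (x i) v}" if "i < r" for i using that by auto
  have le: "card ?T \<le> card {v\<in>H. E (x i) v}" if "i < r" for i
    using H sub[OF that] by (intro card_mono) auto
  have "card ?T \<le> k" using le[of 0] small[of 0] r by simp
  moreover have "1 \<le> sum ?ind ?\<T>" if "card ?T = k"
  proof -
    \<comment> \<open>a tuple whose common neighbourhood in \<open>H\<close> has size \<open>k\<close> lies in a single trace class\<close>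
    have "?T = {v\<in>H. E (x i) v}" if "i < r" for i
      using H sub[OF that] le[OF that] small[OF that] \<open>card ?T = k\<close>
      by (intro card_subset_eq) auto
    then have "x \<in> {0..<r} \<rightarrow>\<^sub>E trace_class n E H ?T" using x by (auto simp: PiE_iff trace_class_def)
    moreover have "finite ?\<T>" using H by (simp add: finite_subset[of _ "Pow H"])
    moreover have "?T \<in> ?\<T>" using \<open>card ?T = k\<close> by auto
    ultimately show ?thesis using member_le_sum[of ?T ?\<T> ?ind] by simp
  qed
  ultimately show ?thesis using k False by (cases "card ?T = k") auto
qed

lemma heavy_degree_power_sum_tuple_bound:
  assumes G: "is_graph n E" and r: "r \<ge> 1" and k: "k \<ge> 1" and H: "H \<subseteq> {0..<n}"
  shows "(\<Sum>v\<in>H. degree n E v ^ r) \<le> card H * (n ^ r - (n - card (rich n E H k)) ^ r) + (k - 1) * n ^ r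
          + (\<Sum>T\<in>{T. T \<subseteq> H \<and> card T = k}. card (trace_class n E H T) ^ r)"
proof -
  let ?P = "{0..<r} \<rightarrow>\<^sub>E {0..<n}" and ?W = "rich n E H k" and ?\<T> = "{T. T \<subseteq> H \<and> card T = k}"
  have fH: "finite H" using H finite_subset by blast
  have fP: "finite ?P" by (simp add: finite_PiE)
  have "(\<Sum>v\<in>H. degree n E v ^ r) = (\<Sum>v\<in>H. card {x\<in>?P. \<forall>i<r. E (x i) v})"
    using degree_power_eq_card_tuples[OF G] by simp
  \<comment> \<open>double counting pairs of a tuple and a common neighbour in \<open>H\<close>\<close>
  also have "\<dots> = (\<Sum>x\<in>?P. card {v\<in>H. \<forall>i<r. E (x i) v})"
    using sum.swap_restrict[OF fH fP, of "\<lambda>_ _. 1::nat"] by simp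
  also have "\<dots> \<le> (\<Sum>x\<in>?P. card H * of_bool (\<exists>i<r. x i \<in> ?W) + (k - 1)
      + (\<Sum>T\<in>?\<T>. of_bool (x \<in> {0..<r} \<rightarrow>\<^sub>E trace_class n E H T)))"
    by (intro sum_mono tuple_common_nbrs_le r k fH)
  also have "\<dots> = card H * card (?P \<inter> {x. \<exists>i<r. x i \<in> ?W}) + card ?P * (k - 1)
      + (\<Sum>T\<in>?\<T>. card (?P \<inter> ({0..<r} \<rightarrow>\<^sub>E trace_class n E H T)))"
    by (simp add: sum.distrib sum_distrib_left sum.swap[of _ ?\<T>] fP mult.commute)
  also have "\<dots> = card H * (n ^ r - (n - card ?W) ^ r) + (k - 1) * n ^ r
      + (\<Sum>T\<in>?\<T>. card (trace_class n E H T) ^ r)"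
  proof -
    have W: "?W \<subseteq> {0..<n}" by (auto simp: rich_def)
    have "?P \<inter> {x. \<exists>i<r. x i \<in> ?W} = ?P - ({0..<r} \<rightarrow>\<^sub>E {0..<n} - ?W)" by (auto simp: PiE_iff)
    moreover have "card ({0..<r} \<rightarrow>\<^sub>E {0..<n} - ?W) = (n - card ?W) ^ r"
      using W by (simp add: card_PiE card_Diff_subset finite_subset)
    moreover have "{0..<r} \<rightarrow>\<^sub>E {0..<n} - ?W \<subseteq> ?P" by (auto simp: PiE_iff)
    ultimately have "card (?P \<inter> {x. \<exists>i<r. x i \<in> ?W}) = n ^ r - (n - card ?W) ^ r"
      by (simp add: card_Diff_subset card_PiE finite_PiE)
    moreover have "?P \<inter> ({0..<r} \<rightarrow>\<^sub>E trace_class n E H T) = {0..<r} \<rightarrow>\<^sub>E trace_class n E H T" for T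
      by (auto simp: PiE_iff trace_class_def)
    ultimately show ?thesis by (simp add: card_PiE mult.commute)
  qed
  finally show ?thesis .
qed

lemma card_rich_le:
  assumes G: "is_graph n E" and bf: "broom_free l s n E" and l: "2 \<le> l" "l \<le> 2 * k + 3"
    and H: "H \<subseteq> {0..<n}"
  shows "card (rich n E H k) \<le> 2 ^ card H * (k + 1 + s)"
proof -
  let ?\<S> = "{S. S \<subseteq> H \<and> card S = k + 1}"
  let ?common = "\<lambda>S. {u\<in>{0..<n}. \<forall>v\<in>S. E u v}"
  have fH: "finite H" using H finite_subset by blast
  have f\<S>: "finite ?\<S>" using fH by (simp add: finite_subset[of _ "Pow H"])
  have "rich n E H k \<subseteq> (\<Union>S\<in>?\<S>. ?common S)"
  proof
    fix u assume u: "u \<in> rich n E H k"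
    then have "k + 1 \<le> card {v\<in>H. E u v}" by (simp add: rich_def)
    then obtain S where "S \<subseteq> {v\<in>H. E u v}" "card S = k + 1" by (rule obtain_subset_with_card_n)
    then show "u \<in> (\<Union>S\<in>?\<S>. ?common S)" using u by (auto simp: rich_def)
  qed
  then have "card (rich n E H k) \<le> card (\<Union>S\<in>?\<S>. ?common S)"
    by (intro card_mono) (auto intro: finite_subset[of _ "{0..<n}"])
  also have "\<dots> \<le> (\<Sum>S\<in>?\<S>. card (?common S))" by (rule card_UN_le[OF f\<S>])
  also have "\<dots> \<le> (\<Sum>S\<in>?\<S>. k + 1 + s)"
  proof (rule sum_mono)
    fix S assume S: "S \<in> ?\<S>"
    \<comment> \<open>otherwise \<open>S\<close> and its common neighbourhood span a biclique containing the broom\<close>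
    show "card (?common S) \<le> k + 1 + s"
    proof (rule ccontr)
      assume "\<not> card (?common S) \<le> k + 1 + s"
      then have "k + 2 + s \<le> card (?common S)" by simp
      moreover have "S \<subseteq> {0..<n}" "card S = k + 1" using S H by auto
      ultimately have "\<not> broom_free l s n E"
        by (intro biclique_not_broom_free[OF G _ _ _ _ _ l, where K=S and C="?common S"]) auto
      then show False using bf by contradiction
    qed
  qed
  also have "\<dots> \<le> card (Pow H) * (k + 1 + s)"
  proof -
    have "card ?\<S> \<le> card (Pow H)" using fH by (intro card_mono) auto
    then show ?thesis unfolding sum_constant of_nat_id by (rule mult_right_mono) simp_all
  qed
  finally show ?thesis by (simp add: card_Pow fH)
qed

lemma heavy_degree_power_sum_bound:
  assumes G: "is_graph n E" and bf: "broom_free l s n E" and l: "2 \<le> l" "l \<le> 2 * k + 3"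
    and r: "r \<ge> 1" and k: "k \<ge> 1" and H: "H \<subseteq> {0..<n}" "card H \<le> h"
  shows "(\<Sum>v\<in>H. real (degree n E v) ^ r)
    \<le> real h * real r * real (2 ^ h * (k + 1 + s)) * real n ^ (r - 1) + (real k - 1) * real n ^ r
      + (\<Sum>T\<in>{T. T \<subseteq> H \<and> card T = k}. real (card (trace_class n E H T)) ^ r)"
    (is "_ \<le> ?c * _ + _ + ?A")
proof -
  let ?W = "rich n E H k"
  have "?W \<subseteq> {0..<n}" by (auto simp: rich_def)
  then have Wn: "card ?W \<le> n" using card_mono[of "{0..<n}" ?W] by simp
  have "(2::nat) ^ card H \<le> 2 ^ h" using H(2) by (rule power_increasing) simp
  then have W: "card ?W \<le> 2 ^ h * (k + 1 + s)"
    using card_rich_le[OF G bf l H(1)] by (meson order_trans mult_le_mono1)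
  have "real n ^ r - (real n - real (card ?W)) ^ r \<le> real r * real (card ?W) * real n ^ (r - 1)"
    using power_diff_le[of "real n - real (card ?W)" "real n" r] Wn r by simp
  also have "\<dots> \<le> real r * real (2 ^ h * (k + 1 + s)) * real n ^ (r - 1)"
    using W by (intro mult_right_mono mult_left_mono) (simp_all only: of_nat_le_iff of_nat_0_le_iff zero_le_power)
  finally have D: "real n ^ r - (real n - real (card ?W)) ^ r \<le> real r * real (2 ^ h * (k + 1 + s)) * real n ^ (r - 1)" .
  have "0 \<le> real n ^ r - (real n - real (card ?W)) ^ r" using Wn by (simp add: power_mono)
  then have "real (card H) * (real n ^ r - (real n - real (card ?W)) ^ r)
      \<le> real h * (real r * real (2 ^ h * (k + 1 + s)) * real n ^ (r - 1))"
    using H(2) D by (intro mult_mono) auto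
  then have HW: "real (card H) * (real n ^ r - (real n - real (card ?W)) ^ r) \<le> ?c * real n ^ (r - 1)"
    by (simp only: mult.assoc)
  have "real (\<Sum>v\<in>H. degree n E v ^ r) \<le> real (card H * (n ^ r - (n - card ?W) ^ r) + (k - 1) * n ^ r
      + (\<Sum>T\<in>{T. T \<subseteq> H \<and> card T = k}. card (trace_class n E H T) ^ r))"
    using heavy_degree_power_sum_tuple_bound[OF G r k H(1)] by (simp only: of_nat_le_iff)
  also have "\<dots> = real (card H) * (real n ^ r - (real n - real (card ?W)) ^ r) + (real k - 1) * real n ^ r + ?A"
    using Wn k power_mono[of "n - card ?W" n r] by (simp add: of_nat_diff)
  finally show ?thesis using HW by simp
qed

lemma heavy_card_mult_le_degree_sum:
  "\<epsilon> * real n * real (card (heavy n E \<epsilon>)) \<le> (\<Sum>v\<in>{0..<n}. real (degree n E v))"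
proof -
  have "\<epsilon> * real n * real (card (heavy n E \<epsilon>)) = (\<Sum>v\<in>heavy n E \<epsilon>. \<epsilon> * real n)" by simp
  also have "\<dots> \<le> (\<Sum>v\<in>heavy n E \<epsilon>. real (degree n E v))" by (intro sum_mono) (auto simp: heavy_def)
  also have "\<dots> \<le> (\<Sum>v\<in>{0..<n}. real (degree n E v))" by (intro sum_mono2) (auto simp: heavy_def)
  finally show ?thesis .
qed

lemma card_heavy_le:
  assumes G: "is_graph n E" and bf: "broom_free l s n E" and l: "2 \<le> l" and \<epsilon>: "0 < \<epsilon>"
  shows "real (card (heavy n E \<epsilon>)) \<le> 2 * real (l + s) / \<epsilon>"
proof (cases "n = 0")
  case False
  have "real (\<Sum>v\<in>{0..<n}. degree n E v) \<le> real (2 * (l + s) * n)"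
    using broom_free_degree_sum_le[OF G bf l] by (simp only: of_nat_le_iff)
  then have "(\<epsilon> * real (card (heavy n E \<epsilon>))) * real n \<le> (2 * real (l + s)) * real n"
    using heavy_card_mult_le_degree_sum[of \<epsilon> n E] by (simp add: mult_ac)
  then have "\<epsilon> * real (card (heavy n E \<epsilon>)) \<le> 2 * real (l + s)" using False by simp
  then show ?thesis using \<epsilon> by (simp add: pos_le_divide_eq mult.commute)
qed (use \<epsilon> in \<open>simp add: heavy_def\<close>)

lemma light_degree_power_sum_le_degree_sum:
  assumes "r \<ge> 1" and "\<epsilon> \<ge> 0"
  shows "(\<Sum>v\<in>{0..<n} - heavy n E \<epsilon>. real (degree n E v) ^ r)
    \<le> (\<epsilon> * real n) ^ (r - 1) * (\<Sum>v\<in>{0..<n}. real (degree n E v))"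
proof -
  have "real (degree n E v) ^ r \<le> (\<epsilon> * real n) ^ (r - 1) * real (degree n E v)"
    if "v \<in> {0..<n} - heavy n E \<epsilon>" for v
  proof -
    have "real (degree n E v) ^ r = real (degree n E v) ^ (r - 1) * real (degree n E v)"
      using assms(1) by (metis Suc_diff_le diff_Suc_1 power_Suc2)
    also have "\<dots> \<le> (\<epsilon> * real n) ^ (r - 1) * real (degree n E v)"
      using that by (intro mult_right_mono power_mono) (auto simp: heavy_def)
    finally show ?thesis .
  qed
  then have "(\<Sum>v\<in>{0..<n} - heavy n E \<epsilon>. real (degree n E v) ^ r)
      \<le> (\<epsilon> * real n) ^ (r - 1) * (\<Sum>v\<in>{0..<n} - heavy n E \<epsilon>. real (degree n E v))"
    unfolding sum_distrib_left by (rule sum_mono)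
  also have "\<dots> \<le> (\<epsilon> * real n) ^ (r - 1) * (\<Sum>v\<in>{0..<n}. real (degree n E v))"
    using assms(2) by (intro mult_left_mono sum_mono2) auto
  finally show ?thesis .
qed

lemma light_degree_power_sum_bound:
  assumes G: "is_graph n E" and bf: "broom_free l s n E" and l: "2 \<le> l"
    and r: "r \<ge> 2" and \<epsilon>: "0 \<le> \<epsilon>" "\<epsilon> \<le> 1"
  shows "(\<Sum>v\<in>{0..<n} - heavy n E \<epsilon>. real (degree n E v) ^ r) \<le> 2 * real (l + s) * \<epsilon> * real n ^ r"
proof -
  obtain r' where r': "r = Suc r'" using r by (cases r) auto
  have "real (\<Sum>v\<in>{0..<n}. degree n E v) \<le> real (2 * (l + s) * n)"
    using broom_free_degree_sum_le[OF G bf l] by (simp only: of_nat_le_iff)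
  then have "(\<epsilon> * real n) ^ (r - 1) * (\<Sum>v\<in>{0..<n}. real (degree n E v))
      \<le> (\<epsilon> * real n) ^ (r - 1) * (2 * real (l + s) * real n)"
    using \<epsilon> by (intro mult_left_mono) auto
  then have "(\<Sum>v\<in>{0..<n} - heavy n E \<epsilon>. real (degree n E v) ^ r)
      \<le> 2 * real (l + s) * \<epsilon> ^ r' * real n ^ r"
    using light_degree_power_sum_le_degree_sum[of r \<epsilon> n E] r \<epsilon> by (simp add: r' power_mult_distrib algebra_simps)
  also have "\<dots> \<le> 2 * real (l + s) * \<epsilon> * real n ^ r"
    using power_decreasing[of 1 r' \<epsilon>] r r' \<epsilon> by (intro mult_right_mono mult_left_mono) auto
  finally show ?thesis .
qed

text \<open>The constant \<open>c\<close> of the error term \<open>c n\<^sup>r\<^sup>-\<^sup>1\<close>: \<open>k r\<^sup>2\<close> is the loss from \<open>(n - r)\<^sup>r\<close> to \<open>n\<^sup>r\<close> in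
  the lower bound, the second summand bounds the tuples meeting a rich vertex when \<open>|H| \<le> h\<close>.\<close>
definition error_const :: "nat \<Rightarrow> nat \<Rightarrow> nat \<Rightarrow> nat \<Rightarrow> real" where
  "error_const l s r h =
    real ((l - 2) div 2) * real r ^ 2 + real h * real r * real (2 ^ h * ((l - 2) div 2 + 1 + s))"

lemma trace_classes_power_sum_ge:
  fixes \<epsilon> :: real
  assumes G: "is_graph n E" and bf: "broom_free l s n E" and l: "4 \<le> l"
    and r: "2 \<le> r" "r \<le> n" and \<epsilon>: "0 \<le> \<epsilon>" "\<epsilon> \<le> 1" and h: "card (heavy n E \<epsilon>) \<le> h"
    and lower: "real ((l - 2) div 2) * (real n - real r) ^ r \<le> (\<Sum>v\<in>{0..<n}. real (degree n E v) ^ r)"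
  shows "(1 - 2 * real (l + s) * \<epsilon>) * real n ^ r - error_const l s r h * real n ^ (r - 1)
    \<le> (\<Sum>T\<in>{T. T \<subseteq> heavy n E \<epsilon> \<and> card T = (l - 2) div 2}.
          real (card (trace_class n E (heavy n E \<epsilon>) T)) ^ r)"
proof -
  let ?k = "(l - 2) div 2" and ?H = "heavy n E \<epsilon>" and ?d = "\<lambda>v. real (degree n E v) ^ r"
  have "real n ^ r - (real n - real r) ^ r \<le> real r * (real n - (real n - real r)) * real n ^ (r - 1)"
    using power_diff_le[of "real n - real r" "real n" r] r by simp
  then have "real ?k * (real n ^ r - (real n - real r) ^ r) \<le> real ?k * (real r ^ 2 * real n ^ (r - 1))"
    by (intro mult_left_mono) (simp_all add: power2_eq_square)
  then have "real ?k * real n ^ r - real ?k * real r ^ 2 * real n ^ (r - 1) \<le> real ?k * (real n - real r) ^ r"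
    by (simp add: algebra_simps)
  moreover have "(\<Sum>v\<in>{0..<n}. ?d v) = (\<Sum>v\<in>?H. ?d v) + (\<Sum>v\<in>{0..<n} - ?H. ?d v)"
    using sum.subset_diff[OF heavy_subset] by (simp add: add.commute)
  moreover have "(\<Sum>v\<in>?H. ?d v) \<le> real h * real r * real (2 ^ h * (?k + 1 + s)) * real n ^ (r - 1)
      + (real ?k - 1) * real n ^ r + (\<Sum>T\<in>{T. T \<subseteq> ?H \<and> card T = ?k}. real (card (trace_class n E ?H T)) ^ r)"
    using l r by (intro heavy_degree_power_sum_bound[OF G bf _ _ _ _ heavy_subset h]) auto
  moreover have "(\<Sum>v\<in>{0..<n} - ?H. ?d v) \<le> 2 * real (l + s) * \<epsilon> * real n ^ r"
    using l r \<epsilon> by (intro light_degree_power_sum_bound[OF G bf]) auto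
  ultimately show ?thesis using lower by (simp add: error_const_def algebra_simps)
qed

lemma trace_class_card_sum_le:
  assumes "finite \<T>"
  shows "(\<Sum>T\<in>\<T>. card (trace_class n E H T)) \<le> n"
proof -
  have "(\<Sum>T\<in>\<T>. card (trace_class n E H T)) = card (\<Union>T\<in>\<T>. trace_class n E H T)"
    using assms by (intro card_UN_disjoint[symmetric]) (auto simp: trace_class_def)
  also have "\<dots> \<le> card {0..<n}" by (intro card_mono) (auto simp: trace_class_def)
  finally show ?thesis by simp
qed

lemma exists_large_trace_class:
  fixes \<epsilon> \<delta> :: real
  assumes G: "is_graph n E" and bf: "broom_free l s n E" and l: "4 \<le> l"
    and r: "2 \<le> r" "r \<le> n" and \<epsilon>: "0 < \<epsilon>" "\<epsilon> \<le> 1" and h: "card (heavy n E \<epsilon>) \<le> h"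
    and lower: "real ((l - 2) div 2) * (real n - real r) ^ r \<le> (\<Sum>v\<in>{0..<n}. real (degree n E v) ^ r)"
    and \<delta>: "\<delta> = 2 * real (l + s) * \<epsilon> + error_const l s r h / real n" "\<delta> \<le> 1 / 2"
  shows "\<exists>T. T \<subseteq> heavy n E \<epsilon> \<and> card T = (l - 2) div 2
    \<and> (1 - 2 * \<delta>) * real n < real (card (trace_class n E (heavy n E \<epsilon>) T))"
proof -
  let ?\<T> = "{T. T \<subseteq> heavy n E \<epsilon> \<and> card T = (l - 2) div 2}"
  let ?x = "\<lambda>T. real (card (trace_class n E (heavy n E \<epsilon>) T))"
  have fin: "finite ?\<T>" by (simp add: finite_subset[of _ "Pow (heavy n E \<epsilon>)"] heavy_def)
  have n: "0 < real n" using r by simp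
  have "0 \<le> error_const l s r h / real n" by (simp add: error_const_def)
  moreover have "0 < 2 * real (l + s) * \<epsilon>" using l \<epsilon> by simp
  ultimately have "0 < \<delta>" using \<delta>(1) by linarith
  have "error_const l s r h * real n ^ (r - 1) = error_const l s r h / real n * real n ^ r"
    using n r by (simp add: power_eq_if)
  then have "(1 - \<delta>) * real n ^ r \<le> (\<Sum>T\<in>?\<T>. ?x T ^ r)"
    using trace_classes_power_sum_ge[OF G bf l r less_imp_le[OF \<epsilon>(1)] \<epsilon>(2) h lower] \<delta>(1)
    by (simp add: algebra_simps)
  moreover have "((1 - 2 * \<delta>) * real n) ^ (r - 1) * real n \<le> (1 - 2 * \<delta>) * real n ^ r"
  proof -
    obtain r' where r': "r = Suc r'" using r by (cases r) auto
    have "(1 - 2 * \<delta>) ^ r' \<le> (1 - 2 * \<delta>) ^ 1"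
      using \<open>0 < \<delta>\<close> \<delta>(2) r r' by (intro power_decreasing) auto
    then have "(1 - 2 * \<delta>) ^ r' * real n ^ r \<le> (1 - 2 * \<delta>) * real n ^ r"
      using n by (intro mult_right_mono) auto
    then show ?thesis by (simp add: r' power_mult_distrib mult.assoc mult.commute)
  qed
  moreover have "(1 - 2 * \<delta>) * real n ^ r < (1 - \<delta>) * real n ^ r"
    using \<open>0 < \<delta>\<close> n by (intro mult_strict_right_mono) auto
  ultimately have "((1 - 2 * \<delta>) * real n) ^ (r - 1) * real n < (\<Sum>T\<in>?\<T>. ?x T ^ r)" by linarith
  moreover have "sum ?x ?\<T> \<le> real n"
    using trace_class_card_sum_le[OF fin] by (simp only: of_nat_le_iff flip: of_nat_sum)
  moreover have "0 \<le> (1 - 2 * \<delta>) * real n" using \<delta>(2) n by simp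
  ultimately have "\<exists>T\<in>?\<T>. (1 - 2 * \<delta>) * real n < ?x T"
    using r by (intro exists_gt_of_power_sum_gt[OF fin]) simp_all
  then show ?thesis by blast
qed

section \<open>Counting r-sets with a prescribed common neighbourhood\<close>

lemma trace_class_choose_le:
  assumes G: "is_graph n E" and r: "r \<ge> 1" and H: "H \<subseteq> {0..<n}" and T: "T \<subseteq> H"
  shows "card (trace_class n E H T) choose r
    \<le> card {X. X \<subseteq> {0..<n} \<and> card X = r \<and> common_nbhd n E X = T}
      + (\<Sum>v\<in>{0..<n} - H. degree n E v choose r)"
proof -
  let ?target = "{X. X \<subseteq> {0..<n} \<and> card X = r \<and> common_nbhd n E X = T}"
  let ?bad = "\<lambda>v. {X. X \<subseteq> {u\<in>{0..<n}. E u v} \<and> card X = r}"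
  \<comment> \<open>an \<open>r\<close>-set in a trace class sees exactly \<open>T\<close> inside \<open>H\<close>, so it fails only through a light common neighbour\<close>
  have "{X. X \<subseteq> trace_class n E H T \<and> card X = r} \<subseteq> ?target \<union> (\<Union>v\<in>{0..<n} - H. ?bad v)"
  proof
    fix X assume X: "X \<in> {X. X \<subseteq> trace_class n E H T \<and> card X = r}"
    then obtain x where x: "x \<in> X" using r by fastforce
    have tr: "{v\<in>H. E u v} = T" "u < n" if "u \<in> X" for u using X that by (auto simp: trace_class_def)
    show "X \<in> ?target \<union> (\<Union>v\<in>{0..<n} - H. ?bad v)"
    proof (cases "\<exists>v\<in>{0..<n} - H. \<forall>u\<in>X. E u v")
      case True
      then show ?thesis using X tr by auto
    next
      case False
      have "common_nbhd n E X = T"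
      proof
        show "common_nbhd n E X \<subseteq> T" using False x tr(1)[OF x] by (auto simp: common_nbhd_def)
        show "T \<subseteq> common_nbhd n E X" using tr T H by (auto simp: common_nbhd_def)
      qed
      then show ?thesis using X tr by auto
    qed
  qed
  moreover have "finite ?target" by (rule finite_subset[of _ "Pow {0..<n}"]) auto
  moreover have "finite (?bad v)" for v by (rule finite_subset[of _ "Pow {0..<n}"]) auto
  ultimately have "card {X. X \<subseteq> trace_class n E H T \<and> card X = r}
      \<le> card ?target + card (\<Union>v\<in>{0..<n} - H. ?bad v)"
    by (meson card_Un_le card_mono finite_UN_I finite_Diff finite_atLeastLessThan finite_UnI le_trans)
  also have "card (\<Union>v\<in>{0..<n} - H. ?bad v) \<le> (\<Sum>v\<in>{0..<n} - H. card (?bad v))"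
    by (rule card_UN_le) simp
  also have "\<dots> = (\<Sum>v\<in>{0..<n} - H. degree n E v choose r)"
    by (simp add: n_subsets degree_eq_card_in_nbrs[OF G])
  finally show ?thesis by (simp add: n_subsets trace_class_def)
qed

lemma r_sets_with_common_nbhd_ge:
  assumes G: "is_graph n E" and r: "r \<ge> 1" and H: "H \<subseteq> {0..<n}" and T: "T \<subseteq> H"
  shows "(1 - real r * (real n - real (card (trace_class n E H T))) / real n) * real (n choose r)
      - (\<Sum>v\<in>{0..<n} - H. real (degree n E v) ^ r)
    \<le> real (card {X. X \<subseteq> {0..<n} \<and> card X = r \<and> common_nbhd n E X = T})"
proof -
  let ?a = "card (trace_class n E H T)" and ?C = "real (n choose r)"
  have "trace_class n E H T \<subseteq> {0..<n}" by (auto simp: trace_class_def)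
  then have an: "?a \<le> n" using card_mono[of "{0..<n}"] by fastforce
  have absorb: "real ((n - ?a) * ((n - 1) choose (r - 1))) = real r * (real n - real ?a) / real n * ?C"
  proof (cases "n = 0")
    case False
    have "r * (n choose r) = n * ((n - 1) choose (r - 1))"
      using binomial_absorption[of "r - 1" n] r by simp
    then have "real n * real ((n - 1) choose (r - 1)) = real r * ?C" by (metis of_nat_mult)
    then show ?thesis using False an by (simp add: of_nat_diff field_simps)
  qed (use an in simp)
  have "real (n choose r) \<le> real ((?a choose r) + (n - ?a) * ((n - 1) choose (r - 1)))"
    using choose_le_choose_add_diff[OF an r] by (simp only: of_nat_le_iff)
  then have R1: "?C \<le> real (?a choose r) + real r * (real n - real ?a) / real n * ?C"
    by (simp only: of_nat_add absorb)
  have "real (d choose r) \<le> real d ^ r" for d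
  proof -
    have "d choose r \<le> (d choose r) * fact r" by simp
    then have "d choose r \<le> d ^ r" using binomial_fact_pow[of d r] by linarith
    then show ?thesis by (simp only: of_nat_le_iff flip: of_nat_power)
  qed
  then have "real (\<Sum>v\<in>{0..<n} - H. degree n E v choose r) \<le> (\<Sum>v\<in>{0..<n} - H. real (degree n E v) ^ r)"
    unfolding of_nat_sum by (rule sum_mono)
  moreover have "real (?a choose r) \<le> real (card {X. X \<subseteq> {0..<n} \<and> card X = r \<and> common_nbhd n E X = T})
      + real (\<Sum>v\<in>{0..<n} - H. degree n E v choose r)"
    using trace_class_choose_le[OF G r H T] by (simp only: of_nat_le_iff flip: of_nat_add)
  ultimately show ?thesis using R1 by (simp only: left_diff_distrib mult_1)
qed

lemma r_sets_with_common_nbhd_ge_large_class: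
  fixes \<epsilon> \<eta> :: real
  assumes G: "is_graph n E" and bf: "broom_free l s n E" and l: "2 \<le> l"
    and r: "2 \<le> r" "r \<le> n" and \<epsilon>: "0 \<le> \<epsilon>" "\<epsilon> \<le> 1" and T: "T \<subseteq> heavy n E \<epsilon>"
    and large: "(1 - \<eta>) * real n \<le> real (card (trace_class n E (heavy n E \<epsilon>) T))"
  shows "(1 - real r * \<eta> - 2 * real (l + s) * \<epsilon> * real r ^ r) * real (n choose r)
    \<le> real (card {X. X \<subseteq> {0..<n} \<and> card X = r \<and> common_nbhd n E X = T})"
proof -
  let ?a = "real (card (trace_class n E (heavy n E \<epsilon>) T))" and ?C = "real (n choose r)"
  have "real r * (real n - ?a) \<le> real r * (\<eta> * real n)"
    using large by (intro mult_left_mono) (auto simp: algebra_simps)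
  then have "real r * (real n - ?a) / real n \<le> real r * \<eta>"
    using r by (simp add: divide_le_eq mult_ac)
  then have "(1 - real r * \<eta> - 2 * real (l + s) * \<epsilon> * real r ^ r) * ?C
      \<le> (1 - real r * (real n - ?a) / real n - 2 * real (l + s) * \<epsilon> * real r ^ r) * ?C"
    by (intro mult_right_mono) auto
  also have "\<dots> \<le> real (card {X. X \<subseteq> {0..<n} \<and> card X = r \<and> common_nbhd n E X = T})"
  proof -
    have "0 < real r ^ r" using r by simp
    moreover have "(real n / real r) ^ r \<le> ?C" by (rule binomial_ge_n_over_k_pow_k[OF r(2)])
    ultimately have "real n ^ r \<le> real r ^ r * ?C" by (simp add: power_divide pos_divide_le_eq mult.commute)
    then have "2 * real (l + s) * \<epsilon> * real n ^ r \<le> 2 * real (l + s) * \<epsilon> * (real r ^ r * ?C)"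
      using \<epsilon> by (intro mult_left_mono) auto
    note this r_sets_with_common_nbhd_ge[OF G _ heavy_subset T, of r]
      and light_degree_power_sum_bound[OF G bf l r(1) \<epsilon>]
    then show ?thesis using r by (simp add: algebra_simps)
  qed
  finally show ?thesis .
qed

lemma common_nbhd_concentration:
  fixes g \<epsilon> :: real
  assumes G: "is_graph n E" and bf: "broom_free l s n E" and l: "4 \<le> l"
    and r: "2 \<le> r" "r \<le> n" and g: "0 < g" "g \<le> 1"
    and lower: "real ((l - 2) div 2) * (real n - real r) ^ r \<le> (\<Sum>v\<in>{0..<n}. real (degree n E v) ^ r)"
    and \<epsilon>: "\<epsilon> = g / (8 * real (l + s) * real r ^ r)" and h: "2 * real (l + s) / \<epsilon> \<le> real h"
    and n: "8 * real r * error_const l s r h / g < real n"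
  shows "\<exists>B. B \<subseteq> {0..<n} \<and> card B = (l - 2) div 2 \<and>
    (1 - g) * real (n choose r) \<le> real (card {X. X \<subseteq> {0..<n} \<and> card X = r \<and> common_nbhd n E X = B})"
proof -
  define t where "t = real (l + s)"
  define R where "R = real r ^ r"
  define \<delta> where "\<delta> = 2 * t * \<epsilon> + error_const l s r h / real n"
  have t: "4 \<le> t" using l by (simp add: t_def)
  have R: "2 * real r \<le> R" "4 \<le> R" using self_power_ge[OF r(1)] by (simp_all add: R_def)
  have \<epsilon>': "\<epsilon> = g / (8 * t * R)" by (simp add: \<epsilon> t_def R_def)
  have "t \<noteq> 0" "R \<noteq> 0" using t R by auto
  then have te: "2 * t * \<epsilon> * R = g / 4" by (simp add: \<epsilon>')
  have "0 < \<epsilon>" using g t R by (simp add: \<epsilon>')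
  have "\<epsilon> \<le> g / 4" unfolding \<epsilon>' using g t R mult_mono[of 4 t 4 R]
    by (intro divide_left_mono) (auto simp: mult.commute)
  then have "\<epsilon> \<le> 1" using g by linarith
  have "real (card (heavy n E \<epsilon>)) \<le> real h"
    using card_heavy_le[OF G bf _ \<open>0 < \<epsilon>\<close>] l h by simp
  then have H: "card (heavy n E \<epsilon>) \<le> h" by simp
  have cN: "2 * real r * (error_const l s r h / real n) \<le> g / 4"
    using n g r by (simp add: field_simps)
  have "2 * t * \<epsilon> * (2 * real r) \<le> 2 * t * \<epsilon> * R" "2 * t * \<epsilon> * 4 \<le> 2 * t * \<epsilon> * R"
    using R t \<open>0 < \<epsilon>\<close> by (intro mult_left_mono; simp)+
  moreover have "4 * (error_const l s r h / real n) \<le> 2 * real r * (error_const l s r h / real n)"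
    using r by (intro mult_right_mono) (auto simp: error_const_def)
  moreover have "real r * (2 * \<delta>) = 2 * t * \<epsilon> * (2 * real r) + 2 * real r * (error_const l s r h / real n)"
    by (simp add: \<delta>_def algebra_simps)
  ultimately have "\<delta> \<le> 1 / 2" and \<delta>g: "real r * (2 * \<delta>) + 2 * t * \<epsilon> * R \<le> g"
    using te cN g unfolding \<delta>_def by linarith+
  then obtain T where T: "T \<subseteq> heavy n E \<epsilon>" "card T = (l - 2) div 2"
    and large: "(1 - 2 * \<delta>) * real n < real (card (trace_class n E (heavy n E \<epsilon>) T))"
    using exists_large_trace_class[OF G bf l r \<open>0 < \<epsilon>\<close> \<open>\<epsilon> \<le> 1\<close> H lower]
    unfolding \<delta>_def t_def by blast
  have "(1 - g) * real (n choose r) \<le> (1 - real r * (2 * \<delta>) - 2 * t * \<epsilon> * R) * real (n choose r)"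
    using \<delta>g by (intro mult_right_mono) auto
  also have "\<dots> \<le> real (card {X. X \<subseteq> {0..<n} \<and> card X = r \<and> common_nbhd n E X = T})"
    using r_sets_with_common_nbhd_ge_large_class[OF G bf _ r _ \<open>\<epsilon> \<le> 1\<close> T(1)] l \<open>0 < \<epsilon>\<close> large
    by (simp add: t_def R_def)
  finally show ?thesis using T heavy_subset by blast
qed

theorem mainTheorem5:
  fixes l s r :: nat and \<gamma> :: real
  assumes "l \<ge> 4" and "r \<ge> 2" and "\<gamma> > 0"
  shows "\<exists>n0. \<forall>n \<ge> n0. \<forall>E. is_graph n E \<and> broom_free l s n E \<and>
     ((\<forall>E'. is_graph n E' \<and> broom_free l s n E' \<longrightarrow> e_pow r n E' \<le> e_pow r n E) \<or>
      (\<forall>E'. is_graph n E' \<and> broom_free l s n E' \<longrightarrow> star_count r n E' \<le> star_count r n E))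
     \<longrightarrow> (\<exists>B. B \<subseteq> {0..<n} \<and> card B = (l - 2) div 2 \<and>
            real (card {X. X \<subseteq> {0..<n} \<and> card X = r \<and> common_nbhd n E X = B})
              \<ge> (1 - \<gamma>) * real (n choose r))"
proof -
  define g where "g = min \<gamma> 1"
  define \<epsilon> where "\<epsilon> = g / (8 * real (l + s) * real r ^ r)"
  define h where "h = nat \<lceil>2 * real (l + s) / \<epsilon>\<rceil>"
  have g: "0 < g" "g \<le> 1" "g \<le> \<gamma>" using assms(3) by (auto simp: g_def)
  have h: "2 * real (l + s) / \<epsilon> \<le> real h" unfolding h_def by linarith
  show ?thesis
  proof (intro exI[of _ "nat \<lceil>8 * real r * error_const l s r h / g\<rceil> + r + l + 1"] allI impI, elim conjE)
    fix n E
    assume n: "nat \<lceil>8 * real r * error_const l s r h / g\<rceil> + r + l + 1 \<le> n"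
      and G: "is_graph n E" and bf: "broom_free l s n E"
      and max: "(\<forall>E'. is_graph n E' \<and> broom_free l s n E' \<longrightarrow> e_pow r n E' \<le> e_pow r n E) \<or>
        (\<forall>E'. is_graph n E' \<and> broom_free l s n E' \<longrightarrow> star_count r n E' \<le> star_count r n E)"
    have "real ((l - 2) div 2) * (real n - real r) ^ r \<le> (\<Sum>v\<in>{0..<n}. real (degree n E v) ^ r)"
      using maximizer_degree_power_sum_ge[OF max] assms n by simp
    moreover have "8 * real r * error_const l s r h / g < real n" using n by linarith
    ultimately obtain B where "B \<subseteq> {0..<n}" "card B = (l - 2) div 2"
      "(1 - g) * real (n choose r) \<le> real (card {X. X \<subseteq> {0..<n} \<and> card X = r \<and> common_nbhd n E X = B})"
      using common_nbhd_concentration[OF G bf assms(1,2) _ g(1,2) _ \<epsilon>_def h] n by auto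
    moreover have "(1 - \<gamma>) * real (n choose r) \<le> (1 - g) * real (n choose r)"
      using g by (intro mult_right_mono) auto
    ultimately show "\<exists>B. B \<subseteq> {0..<n} \<and> card B = (l - 2) div 2 \<and>
        (1 - \<gamma>) * real (n choose r) \<le> real (card {X. X \<subseteq> {0..<n} \<and> card X = r \<and> common_nbhd n E X = B})"
      by (intro exI[of _ B]) auto
  qed
qed

end
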